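(* Let $f$ be a nonzero polynomial whose multiset of reproducible zeros equals its full zero multiset, $R(f)=Z(f)$, and write $$R(f)=Z(f)=\{\underbrace{\beta_1,\dots,\beta_1}_{r_1},\dots,\underbrace{\beta_n,\dots,\beta_n}_{r_n}\}$$ with $\beta_1,\dots,\beta_n$ distinct. Then $$[f]=\Big(\operatorname{span}\big\{k_{\beta_j}^{(\ell)}:0\le\ell\le r_j-1,\ 1\le j\le n\big\}\Big)^{\perp}.$$
   Context: Standing assumptions: $\Omega\subset\mathbb C$ is a domain with $0\in\Omega$, $\mathcal H$ is a Hilbert space of analytic functions on $\Omega$ with bounded point evaluations at points of $\Omega$, the shift $(Sf)(z)=zf(z)$ is bounded on $\mathcal H$, and the polynomials $\mathcal P$ are dense in $\mathcal H$. For $g\in\mathcal H$, $[g]$ is the closure in $\mathcal H$ of $\operatorname{span}\{z^kg:k\ge0\}$. A point $\beta\in\mathbb C$ is reproducible of order $m\ge0$ if $p\mapsto p^{(m)}(\beta)$ on $\mathcal P$ extends to a bounded linear functional on $\mathcal H$; $k_\beta^{(m)}\in\mathcal H$ denotes the element representing this functional, $\langle g,k_\beta^{(m)}\rangle=g^{(m)}(\beta)$ (the value of the extension). $\beta$ is a reproducible point if reproducible of order $0$; reproducibility of order $m$ implies that of all orders $j\le m$; $\operatorname{ro}(\beta)\in\{0,1,\dots\}\cup\{\infty\}$ is the supremum of the orders of reproducibility. For a nonzero polynomial $p$: $Z(p)$ is its zero multiset (each zero listed with its multiplicity), and $R(p)$ is its multiset of reproducible zeros: each reproducible point $\beta$ at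 which $p$ has a zero of order $m\ge1$ is listed $\min\{m,\operatorname{ro}(\beta)+1\}$ times, and non-reproducible zeros are omitted. *)

theory Defs
  imports "HOL-Complex_Analysis.Complex_Analysis" "HOL-Computational_Algebra.Polynomial"
          "HOL-Library.Multiset" "HOL-Library.Extended_Nat"
begin

type_synonym cfun = "complex \<Rightarrow> complex"

text \<open>Elements of the Hilbert space are functions on \<Omega>, extended by 0 outside \<Omega>.
  The inner product ip is linear in the first argument.\<close>

definition hnorm :: "(cfun \<Rightarrow> cfun \<Rightarrow> complex) \<Rightarrow> cfun \<Rightarrow> real" where
  "hnorm ip f = sqrt (Re (ip f f))"

definition pfun :: "complex set \<Rightarrow> complex poly \<Rightarrow> cfun" where
  "pfun \<Omega> p = (\<lambda>z. if z \<in> \<Omega> then poly p z else 0)"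

definition is_hilbert_space :: "cfun set \<Rightarrow> (cfun \<Rightarrow> cfun \<Rightarrow> complex) \<Rightarrow> bool" where
  "is_hilbert_space H ip \<longleftrightarrow>
     (\<lambda>z. 0) \<in> H \<and>
     (\<forall>f\<in>H. \<forall>g\<in>H. (\<lambda>z. f z + g z) \<in> H) \<and>
     (\<forall>c. \<forall>f\<in>H. (\<lambda>z. c * f z) \<in> H) \<and>
     (\<forall>f\<in>H. \<forall>g\<in>H. \<forall>h\<in>H. ip (\<lambda>z. f z + g z) h = ip f h + ip g h) \<and>
     (\<forall>c. \<forall>f\<in>H. \<forall>g\<in>H. ip (\<lambda>z. c * f z) g = c * ip f g) \<and>
     (\<forall>f\<in>H. \<forall>g\<in>H. ip g f = cnj (ip f g)) \<and>
     (\<forall>f\<in>H. Im (ip f f) = 0 \<and> Re (ip f f) \<ge> 0) \<and>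
     (\<forall>f\<in>H. ip f f = 0 \<longrightarrow> f = (\<lambda>z. 0)) \<and>
     (\<forall>X. (\<forall>n. X n \<in> H) \<and>
          (\<forall>e>0. \<exists>N. \<forall>m\<ge>N. \<forall>n\<ge>N. hnorm ip (\<lambda>z. X m z - X n z) < e)
          \<longrightarrow> (\<exists>f\<in>H. (\<lambda>n. hnorm ip (\<lambda>z. X n z - f z)) \<longlonglongrightarrow> 0))"

definition std_space :: "complex set \<Rightarrow> cfun set \<Rightarrow> (cfun \<Rightarrow> cfun \<Rightarrow> complex) \<Rightarrow> bool" where
  "std_space \<Omega> H ip \<longleftrightarrow>
     open \<Omega> \<and> connected \<Omega> \<and> 0 \<in> \<Omega> \<and>
     is_hilbert_space H ip \<and>
     (\<forall>f\<in>H. f holomorphic_on \<Omega> \<and> (\<forall>z. z \<notin> \<Omega> \<longrightarrow> f z = 0)) \<and>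
     (\<forall>w\<in>\<Omega>. \<exists>C. \<forall>f\<in>H. cmod (f w) \<le> C * hnorm ip f) \<and>
     (\<forall>f\<in>H. (\<lambda>z. z * f z) \<in> H) \<and>
     (\<exists>C. \<forall>f\<in>H. hnorm ip (\<lambda>z. z * f z) \<le> C * hnorm ip f) \<and>
     (\<forall>p. pfun \<Omega> p \<in> H) \<and>
     (\<forall>f\<in>H. \<forall>e>0. \<exists>p. hnorm ip (\<lambda>z. f z - pfun \<Omega> p z) < e)"

definition hclosure :: "(cfun \<Rightarrow> cfun \<Rightarrow> complex) \<Rightarrow> cfun set \<Rightarrow> cfun set \<Rightarrow> cfun set" where
  "hclosure ip H S = {f \<in> H. \<forall>e>0. \<exists>s\<in>S. hnorm ip (\<lambda>z. f z - s z) < e}"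

definition cspan :: "cfun set \<Rightarrow> cfun set" where
  "cspan S = {g. \<exists>A c. finite A \<and> A \<subseteq> S \<and> g = (\<lambda>z. \<Sum>a\<in>A. c a * a z)}"

definition cyclic :: "(cfun \<Rightarrow> cfun \<Rightarrow> complex) \<Rightarrow> cfun set \<Rightarrow> cfun \<Rightarrow> cfun set" where
  "cyclic ip H g = hclosure ip H (cspan {(\<lambda>z. z ^ k * g z) | k. True})"

definition orth :: "(cfun \<Rightarrow> cfun \<Rightarrow> complex) \<Rightarrow> cfun set \<Rightarrow> cfun set \<Rightarrow> cfun set" where
  "orth ip H S = {g \<in> H. \<forall>k\<in>S. ip g k = 0}"

definition reproducible :: "complex set \<Rightarrow> cfun set \<Rightarrow> (cfun \<Rightarrow> cfun \<Rightarrow> complex) \<Rightarrow> complex \<Rightarrow> nat \<Rightarrow> bool" where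
  "reproducible \<Omega> H ip \<beta> m \<longleftrightarrow>
     (\<exists>L :: cfun \<Rightarrow> complex.
        (\<forall>f\<in>H. \<forall>g\<in>H. L (\<lambda>z. f z + g z) = L f + L g) \<and>
        (\<forall>c. \<forall>f\<in>H. L (\<lambda>z. c * f z) = c * L f) \<and>
        (\<exists>C. \<forall>f\<in>H. cmod (L f) \<le> C * hnorm ip f) \<and>
        (\<forall>p. L (pfun \<Omega> p) = poly ((pderiv ^^ m) p) \<beta>))"

definition ro :: "complex set \<Rightarrow> cfun set \<Rightarrow> (cfun \<Rightarrow> cfun \<Rightarrow> complex) \<Rightarrow> complex \<Rightarrow> enat" where
  "ro \<Omega> H ip \<beta> = Sup {enat m | m. reproducible \<Omega> H ip \<beta> m}"

text \<open>k_beta^(m): the element of H representing the functional (it is determined by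
  its values on the dense set of polynomials).\<close>
definition kernel :: "complex set \<Rightarrow> cfun set \<Rightarrow> (cfun \<Rightarrow> cfun \<Rightarrow> complex) \<Rightarrow> complex \<Rightarrow> nat \<Rightarrow> cfun" where
  "kernel \<Omega> H ip \<beta> m = (THE k. k \<in> H \<and> (\<forall>p. ip (pfun \<Omega> p) k = poly ((pderiv ^^ m) p) \<beta>))"

definition Zmset :: "complex poly \<Rightarrow> complex multiset" where
  "Zmset p = Abs_multiset (\<lambda>\<beta>. order \<beta> p)"

definition Rmset :: "complex set \<Rightarrow> cfun set \<Rightarrow> (cfun \<Rightarrow> cfun \<Rightarrow> complex) \<Rightarrow> complex poly \<Rightarrow> complex multiset" where
  "Rmset \<Omega> H ip p = Abs_multiset (\<lambda>\<beta>.
      if reproducible \<Omega> H ip \<beta> 0 \<and> order \<beta> p \<ge> 1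
      then the_enat (min (enat (order \<beta> p)) (ro \<Omega> H ip \<beta> + 1)) else 0)"

end

theory Submission
  imports Defs "HOL-Computational_Algebra.Polynomial_Factorial"
    "HOL-Computational_Algebra.Field_as_Ring" "HOL-Computational_Algebra.Fundamental_Theorem_Algebra"
begin

text \<open>The zeros of \<open>f\<close> being reproducible to full multiplicity, each functional
  \<open>p \<mapsto> p\<^sup>(\<^sup>l\<^sup>)(\<beta>\<^sub>j)\<close> with \<open>l < r\<^sub>j\<close> is bounded and, by the Riesz representation theorem,
  is given by a kernel \<open>k\<^sub>j\<^sub>l\<close>. A polynomial is a multiple of \<open>f\<close> exactly when all these
  Hermite data vanish; hence \<open>[f] = closure (f \<cdot> \<complex>[z])\<close> is orthogonal to every kernel.
  Conversely, let \<open>x\<close> be orthogonal to the kernels and \<open>p\<close> a polynomial close to \<open>x\<close>.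
  With a Hermite interpolation basis \<open>b\<^sub>j\<^sub>l\<close> (built by the Chinese remainder theorem),
  \<open>p - \<Sum> \<langle>p, k\<^sub>j\<^sub>l\<rangle> b\<^sub>j\<^sub>l\<close> has vanishing Hermite data, so it lies in \<open>f \<cdot> \<complex>[z]\<close>;
  and since \<open>\<langle>p, k\<^sub>j\<^sub>l\<rangle> = \<langle>p - x, k\<^sub>j\<^sub>l\<rangle>\<close>, it is still close to \<open>x\<close>.\<close>

lemma cspanI: "finite A \<Longrightarrow> A \<subseteq> S \<Longrightarrow> (\<lambda>z. \<Sum>a\<in>A. c a * a z) \<in> cspan S"
  unfolding cspan_def by blast

lemma cspan_minimal:
  assumes "(\<lambda>z. 0) \<in> T" "\<And>f g. f \<in> T \<Longrightarrow> g \<in> T \<Longrightarrow> (\<lambda>z. f z + g z) \<in> T"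
    and "\<And>c f. f \<in> T \<Longrightarrow> (\<lambda>z. c * f z) \<in> T" and "S \<subseteq> T"
  shows "cspan S \<subseteq> T"
proof
  fix g
  assume "g \<in> cspan S"
  then obtain A c where A: "finite A" "A \<subseteq> S" and g: "g = (\<lambda>z. \<Sum>a\<in>A. c a * a z)"
    unfolding cspan_def by blast
  from A have "(\<lambda>z. \<Sum>a\<in>A. c a * a z) \<in> T"
  proof (induction A rule: finite_induct)
    case (insert a A)
    then have "(\<lambda>z. c a * a z + (\<Sum>a\<in>A. c a * a z)) \<in> T"
      using assms(2)[OF assms(3)] assms(4) by blast
    with insert show ?case by simp
  qed (simp add: assms(1))
  then show "g \<in> T" using g by simp
qed

lemma cspan_superset: "a \<in> S \<Longrightarrow> a \<in> cspan S"
  using cspanI[of "{a}" S "\<lambda>_. 1"] by simp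

lemma cspan_zero: "(\<lambda>z. 0) \<in> cspan S"
  using cspanI[of "{}" S] by simp

lemma cspan_scale: "g \<in> cspan S \<Longrightarrow> (\<lambda>z. c * g z) \<in> cspan S"
proof -
  assume "g \<in> cspan S"
  then obtain A d where "finite A" "A \<subseteq> S" "g = (\<lambda>z. \<Sum>a\<in>A. d a * a z)"
    unfolding cspan_def by blast
  then show ?thesis
    using cspanI[of A S "\<lambda>a. c * d a"] by (simp add: sum_distrib_left mult.assoc)
qed

lemma cspan_add:
  assumes "f \<in> cspan S" "g \<in> cspan S"
  shows "(\<lambda>z. f z + g z) \<in> cspan S"
proof -
  obtain A c B d where A: "finite A" "A \<subseteq> S" "f = (\<lambda>z. \<Sum>a\<in>A. c a * a z)"
    and B: "finite B" "B \<subseteq> S" "g = (\<lambda>z. \<Sum>a\<in>B. d a * a z)"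
    using assms unfolding cspan_def by blast
  define e where "e a = (if a \<in> A then c a else 0) + (if a \<in> B then d a else 0)" for a
  have "(\<lambda>z. f z + g z) = (\<lambda>z. \<Sum>a\<in>A \<union> B. e a * a z)"
  proof
    fix z
    have "(\<Sum>a\<in>A \<union> B. e a * a z) = (\<Sum>a\<in>A \<union> B. if a \<in> A then c a * a z else 0)
          + (\<Sum>a\<in>A \<union> B. if a \<in> B then d a * a z else 0)"
      unfolding sum.distrib[symmetric] by (rule sum.cong) (auto simp: e_def distrib_right)
    also have "\<dots> = f z + g z"
      using A B by (simp add: sum.If_cases Int_absorb1)
    finally show "f z + g z = (\<Sum>a\<in>A \<union> B. e a * a z)" ..
  qed
  then show ?thesis using A B cspanI[of "A \<union> B" S e] by simp
qed

lemma cspan_sum: "finite I \<Longrightarrow> (\<And>i. i \<in> I \<Longrightarrow> g i \<in> cspan S) \<Longrightarrow> (\<lambda>z. \<Sum>i\<in>I. g i z) \<in> cspan S"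
  by (induction I rule: finite_induct) (simp_all add: cspan_zero cspan_add)

lemma cspan_shifts_eq:
  "cspan {(\<lambda>z. z ^ k * pfun \<Omega> f z) | k. True} = range (\<lambda>q. pfun \<Omega> (f * q))"
proof
  show "cspan {(\<lambda>z. z ^ k * pfun \<Omega> f z) | k. True} \<subseteq> range (\<lambda>q. pfun \<Omega> (f * q))"
  proof (rule cspan_minimal)
    show "(\<lambda>z. 0) \<in> range (\<lambda>q. pfun \<Omega> (f * q))"
      by (rule range_eqI[of _ _ 0]) (simp add: pfun_def fun_eq_iff)
    show "(\<lambda>z. g z + h z) \<in> range (\<lambda>q. pfun \<Omega> (f * q))"
      if gh: "g \<in> range (\<lambda>q. pfun \<Omega> (f * q))" "h \<in> range (\<lambda>q. pfun \<Omega> (f * q))" for g h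
    proof -
      obtain q1 q2 where "g = pfun \<Omega> (f * q1)" "h = pfun \<Omega> (f * q2)" using gh by blast
      then have "(\<lambda>z. g z + h z) = pfun \<Omega> (f * (q1 + q2))" by (auto simp: pfun_def algebra_simps)
      then show ?thesis by blast
    qed
    show "(\<lambda>z. c * g z) \<in> range (\<lambda>q. pfun \<Omega> (f * q))"
      if g: "g \<in> range (\<lambda>q. pfun \<Omega> (f * q))" for c g
    proof -
      obtain q where "g = pfun \<Omega> (f * q)" using g by blast
      then have "(\<lambda>z. c * g z) = pfun \<Omega> (f * smult c q)" by (auto simp: pfun_def)
      then show ?thesis by blast
    qed
    show "{(\<lambda>z. z ^ k * pfun \<Omega> f z) | k. True} \<subseteq> range (\<lambda>q. pfun \<Omega> (f * q))"
    proof clarify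
      fix k
      have "(\<lambda>z. z ^ k * pfun \<Omega> f z) = pfun \<Omega> (f * monom 1 k)"
        by (auto simp: pfun_def poly_monom)
      then show "(\<lambda>z. z ^ k * pfun \<Omega> f z) \<in> range (\<lambda>q. pfun \<Omega> (f * q))" by blast
    qed
  qed
  show "range (\<lambda>q. pfun \<Omega> (f * q)) \<subseteq> cspan {(\<lambda>z. z ^ k * pfun \<Omega> f z) | k. True}"
  proof clarify
    fix q
    have "pfun \<Omega> (f * q) = (\<lambda>z. \<Sum>k\<le>degree q. coeff q k * (z ^ k * pfun \<Omega> f z))"
    proof
      fix z
      have "(\<Sum>k\<le>degree q. coeff q k * (z ^ k * pfun \<Omega> f z)) = poly q z * pfun \<Omega> f z"
        by (simp add: poly_altdef sum_distrib_right mult.assoc)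
      then show "pfun \<Omega> (f * q) z = (\<Sum>k\<le>degree q. coeff q k * (z ^ k * pfun \<Omega> f z))"
        by (simp add: pfun_def)
    qed
    also have "\<dots> \<in> cspan {(\<lambda>z. z ^ k * pfun \<Omega> f z) | k. True}"
      by (intro cspan_sum cspan_scale cspan_superset) auto
    finally show "pfun \<Omega> (f * q) \<in> cspan {(\<lambda>z. z ^ k * pfun \<Omega> f z) | k. True}" .
  qed
qed

section \<open>Hilbert spaces of functions\<close>

definition bounded_functional :: "cfun set \<Rightarrow> (cfun \<Rightarrow> cfun \<Rightarrow> complex) \<Rightarrow> (cfun \<Rightarrow> complex) \<Rightarrow> bool"
  where "bounded_functional H ip L \<longleftrightarrow>
     (\<forall>f\<in>H. \<forall>g\<in>H. L (\<lambda>z. f z + g z) = L f + L g) \<and>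
     (\<forall>c. \<forall>f\<in>H. L (\<lambda>z. c * f z) = c * L f) \<and>
     (\<exists>C. \<forall>f\<in>H. cmod (L f) \<le> C * hnorm ip f)"

lemma reproducible_iff_bounded_functional:
  "reproducible \<Omega> H ip \<beta> m \<longleftrightarrow>
     (\<exists>L. bounded_functional H ip L \<and> (\<forall>p. L (pfun \<Omega> p) = poly ((pderiv ^^ m) p) \<beta>))"
  unfolding reproducible_def bounded_functional_def by blast

locale fun_hilbert_space =
  fixes H :: "cfun set" and ip :: "cfun \<Rightarrow> cfun \<Rightarrow> complex"
  assumes hilbert: "is_hilbert_space H ip"
begin

lemma zero_mem: "(\<lambda>z. 0) \<in> H"
  using hilbert unfolding is_hilbert_space_def by blast

lemma add_mem: "f \<in> H \<Longrightarrow> g \<in> H \<Longrightarrow> (\<lambda>z. f z + g z) \<in> H"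
  using hilbert unfolding is_hilbert_space_def by blast

lemma scale_mem: "f \<in> H \<Longrightarrow> (\<lambda>z. c * f z) \<in> H"
  using hilbert unfolding is_hilbert_space_def by blast

lemma ip_add_left: "f \<in> H \<Longrightarrow> g \<in> H \<Longrightarrow> h \<in> H \<Longrightarrow> ip (\<lambda>z. f z + g z) h = ip f h + ip g h"
  using hilbert unfolding is_hilbert_space_def by blast

lemma ip_scale_left: "f \<in> H \<Longrightarrow> g \<in> H \<Longrightarrow> ip (\<lambda>z. c * f z) g = c * ip f g"
  using hilbert unfolding is_hilbert_space_def by blast

lemma ip_commute: "f \<in> H \<Longrightarrow> g \<in> H \<Longrightarrow> ip g f = cnj (ip f g)"
  using hilbert unfolding is_hilbert_space_def by blast

lemma ip_self: "f \<in> H \<Longrightarrow> Im (ip f f) = 0 \<and> Re (ip f f) \<ge> 0"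
  using hilbert unfolding is_hilbert_space_def by blast

lemma ip_self_eq_0: "f \<in> H \<Longrightarrow> ip f f = 0 \<Longrightarrow> f = (\<lambda>z. 0)"
  using hilbert unfolding is_hilbert_space_def by blast

lemma complete:
  "\<forall>n. X n \<in> H \<Longrightarrow> \<forall>e>0. \<exists>N. \<forall>m\<ge>N. \<forall>n\<ge>N. hnorm ip (\<lambda>z. X m z - X n z) < e \<Longrightarrow>
   \<exists>f\<in>H. (\<lambda>n. hnorm ip (\<lambda>z. X n z - f z)) \<longlonglongrightarrow> 0"
  using hilbert unfolding is_hilbert_space_def by blast

lemma diff_mem: "f \<in> H \<Longrightarrow> g \<in> H \<Longrightarrow> (\<lambda>z. f z - g z) \<in> H"
  using add_mem[of f "\<lambda>z. (-1) * g z"] scale_mem[of g "-1"] by simp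

lemma sum_mem: "finite I \<Longrightarrow> (\<And>i. i \<in> I \<Longrightarrow> g i \<in> H) \<Longrightarrow> (\<lambda>z. \<Sum>i\<in>I. g i z) \<in> H"
  by (induction I rule: finite_induct) (simp_all add: zero_mem add_mem)

lemma ip_add_right:
  assumes "f \<in> H" "g \<in> H" "h \<in> H" shows "ip h (\<lambda>z. f z + g z) = ip h f + ip h g"
  using assms by (simp add: ip_commute[OF add_mem[OF assms(1,2)] assms(3)] ip_add_left
      ip_commute[OF assms(1,3)] ip_commute[OF assms(2,3)])

lemma ip_scale_right:
  assumes "f \<in> H" "g \<in> H" shows "ip g (\<lambda>z. c * f z) = cnj c * ip g f"
  using assms by (simp add: ip_commute[OF scale_mem[OF assms(1)] assms(2)] ip_scale_left
      ip_commute[OF assms])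

lemma ip_diff_left:
  assumes "f \<in> H" "g \<in> H" "h \<in> H" shows "ip (\<lambda>z. f z - g z) h = ip f h - ip g h"
  using assms ip_add_left[of f "\<lambda>z. (-1) * g z" h] ip_scale_left[of g h "-1"] scale_mem[of g "-1"]
  by simp

lemma ip_diff_right:
  assumes "f \<in> H" "g \<in> H" "h \<in> H" shows "ip h (\<lambda>z. f z - g z) = ip h f - ip h g"
  using assms by (simp add: ip_commute[OF diff_mem[OF assms(1,2)] assms(3)] ip_diff_left
      ip_commute[OF assms(1,3)] ip_commute[OF assms(2,3)])

lemma ip_zero_right: "g \<in> H \<Longrightarrow> ip g (\<lambda>z. 0) = 0"
  using ip_scale_right[OF zero_mem, of g 0] by simp

lemma hnorm_nonneg: "f \<in> H \<Longrightarrow> hnorm ip f \<ge> 0"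
  unfolding hnorm_def using ip_self by simp

lemma hnorm_square: "f \<in> H \<Longrightarrow> hnorm ip f ^ 2 = Re (ip f f)"
  unfolding hnorm_def using ip_self by simp

lemma ip_self_eq_hnorm: "f \<in> H \<Longrightarrow> ip f f = complex_of_real (hnorm ip f ^ 2)"
  unfolding hnorm_def using ip_self by (simp add: complex_eq_iff)

lemma hnorm_eq_0_iff: "f \<in> H \<Longrightarrow> hnorm ip f = 0 \<longleftrightarrow> f = (\<lambda>z. 0)"
  using ip_self_eq_hnorm[of f] ip_self_eq_0[of f] ip_zero_right[OF zero_mem] by (auto simp: hnorm_def)

lemma cauchy_schwarz:
  assumes f: "f \<in> H" and g: "g \<in> H"
  shows "cmod (ip f g) \<le> hnorm ip f * hnorm ip g"
proof (cases "hnorm ip g = 0")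
  case True
  then have "g = (\<lambda>z. 0)" using g hnorm_eq_0_iff by blast
  then show ?thesis using ip_zero_right[OF f] hnorm_nonneg[OF f] True by simp
next
  case False
  define c where "c = ip f g"
  define G where "G = hnorm ip g ^ 2"
  have G: "G > 0" using False hnorm_nonneg[OF g] unfolding G_def by simp
  define t where "t = c / G"
  define v where "v = (\<lambda>z. f z - t * g z)"
  have tg: "(\<lambda>z. t * g z) \<in> H" using g by (rule scale_mem)
  have vH: "v \<in> H" unfolding v_def using f tg by (rule diff_mem)
  have "ip v v = ip f v - t * ip g v"
    unfolding v_def using ip_diff_left[OF f tg] diff_mem[OF f tg] ip_scale_left[OF g]
    by (simp add: v_def[symmetric] vH)
  also have "ip f v = ip f f - cnj t * c"
    unfolding v_def c_def using ip_diff_right[OF f tg f] ip_scale_right[OF g f] by simp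
  also have "ip g v = cnj c - cnj t * G"
    unfolding v_def c_def G_def using ip_diff_right[OF f tg g] ip_scale_right[OF g g]
      ip_commute[OF f g] ip_self_eq_hnorm[OF g] by simp
  also have "ip f f - cnj t * c - t * (cnj c - cnj t * G) = hnorm ip f ^ 2 - c * cnj c / G"
    using G ip_self_eq_hnorm[OF f] unfolding t_def by (simp add: field_simps)
  also have "c * cnj c = complex_of_real ((cmod c)^2)"
    by (simp add: complex_mult_cnj cmod_def)
  finally have "hnorm ip f ^ 2 - (cmod c)^2 / G \<ge> 0"
    using ip_self[OF vH] by simp
  then have "(cmod c)^2 \<le> hnorm ip f ^ 2 * G"
    using G by (simp add: field_simps)
  then have "(cmod c)^2 \<le> (hnorm ip f * hnorm ip g)^2"
    unfolding G_def by (simp add: power_mult_distrib)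
  from power2_le_imp_le[OF this mult_nonneg_nonneg[OF hnorm_nonneg[OF f] hnorm_nonneg[OF g]]]
  show ?thesis unfolding c_def .
qed

lemma ip_add_self:
  assumes "f \<in> H" "g \<in> H"
  shows "ip (\<lambda>z. f z + g z) (\<lambda>z. f z + g z) = ip f f + ip g g + ip f g + cnj (ip f g)"
  using assms by (simp add: ip_add_left ip_add_right add_mem ip_commute[of f g])

lemma ip_diff_self:
  assumes "f \<in> H" "g \<in> H"
  shows "ip (\<lambda>z. f z - g z) (\<lambda>z. f z - g z) = ip f f + ip g g - ip f g - cnj (ip f g)"
  using assms by (simp add: ip_diff_left ip_diff_right diff_mem ip_commute[of f g])

lemma hnorm_add_le:
  assumes f: "f \<in> H" and g: "g \<in> H"
  shows "hnorm ip (\<lambda>z. f z + g z) \<le> hnorm ip f + hnorm ip g"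
proof -
  have "Re (ip f g) \<le> hnorm ip f * hnorm ip g"
    using cauchy_schwarz[OF f g] complex_Re_le_cmod order_trans by blast
  moreover have "hnorm ip (\<lambda>z. f z + g z) ^ 2 = hnorm ip f ^ 2 + hnorm ip g ^ 2 + 2 * Re (ip f g)"
    using hnorm_square[OF add_mem[OF f g]] ip_add_self[OF f g] hnorm_square[OF f] hnorm_square[OF g]
    by simp
  ultimately have "hnorm ip (\<lambda>z. f z + g z) ^ 2 \<le> (hnorm ip f + hnorm ip g)^2"
    by (simp add: power2_sum)
  then show ?thesis
    using power2_le_imp_le add_nonneg_nonneg[OF hnorm_nonneg[OF f] hnorm_nonneg[OF g]] by blast
qed

lemma hnorm_scale: "f \<in> H \<Longrightarrow> hnorm ip (\<lambda>z. c * f z) = cmod c * hnorm ip f"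
  unfolding hnorm_def
  by (simp add: ip_scale_left ip_scale_right scale_mem mult.assoc[symmetric] complex_mult_cnj
      ip_self_eq_hnorm real_sqrt_mult cmod_def hnorm_nonneg del: of_real_power)

lemma hnorm_diff_commute: "f \<in> H \<Longrightarrow> g \<in> H \<Longrightarrow> hnorm ip (\<lambda>z. f z - g z) = hnorm ip (\<lambda>z. g z - f z)"
  using hnorm_scale[OF diff_mem, of f g "-1"] by simp

lemma parallelogram_law:
  assumes "f \<in> H" "g \<in> H"
  shows "hnorm ip (\<lambda>z. f z + g z) ^ 2 + hnorm ip (\<lambda>z. f z - g z) ^ 2
           = 2 * hnorm ip f ^ 2 + 2 * hnorm ip g ^ 2"
  using ip_self_eq_hnorm[OF add_mem[OF assms]] ip_self_eq_hnorm[OF diff_mem[OF assms]]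
    ip_add_self[OF assms] ip_diff_self[OF assms] ip_self_eq_hnorm[OF assms(1)]
    ip_self_eq_hnorm[OF assms(2)]
  by (simp add: complex_eq_iff)

lemma hnorm_sum_le:
  "finite I \<Longrightarrow> (\<And>i. i \<in> I \<Longrightarrow> g i \<in> H) \<Longrightarrow>
   hnorm ip (\<lambda>z. \<Sum>i\<in>I. g i z) \<le> (\<Sum>i\<in>I. hnorm ip (g i))"
proof (induction I rule: finite_induct)
  case empty
  then show ?case using hnorm_eq_0_iff[OF zero_mem] by simp
next
  case (insert a I)
  have "(\<lambda>z. \<Sum>i\<in>I. g i z) \<in> H" using insert by (intro sum_mem) auto
  then have "hnorm ip (\<lambda>z. g a z + (\<Sum>i\<in>I. g i z)) \<le> hnorm ip (g a) + hnorm ip (\<lambda>z. \<Sum>i\<in>I. g i z)"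
    using hnorm_add_le[of "g a" "\<lambda>z. \<Sum>i\<in>I. g i z"] insert.prems by simp
  with insert show ?case by simp
qed

lemma norm_ip_diff_le:
  "x \<in> H \<Longrightarrow> y \<in> H \<Longrightarrow> k \<in> H \<Longrightarrow> cmod (ip x k - ip y k) \<le> hnorm ip (\<lambda>z. x z - y z) * hnorm ip k"
  using cauchy_schwarz[OF diff_mem] ip_diff_left by simp

lemma orth_of_approx:
  assumes "x \<in> H" "k \<in> H"
    and "\<And>e. e > 0 \<Longrightarrow> \<exists>s\<in>H. ip s k = 0 \<and> hnorm ip (\<lambda>z. x z - s z) < e"
  shows "ip x k = 0"
proof -
  have bound: "cmod (ip x k) < e * (hnorm ip k + 1)" if "e > 0" for e
  proof -
    obtain s where s: "s \<in> H" "ip s k = 0" "hnorm ip (\<lambda>z. x z - s z) < e"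
      using assms(3) \<open>e > 0\<close> by blast
    have "cmod (ip x k) \<le> hnorm ip (\<lambda>z. x z - s z) * hnorm ip k"
      using norm_ip_diff_le[OF assms(1) s(1) assms(2)] s(2) by simp
    also have "\<dots> \<le> e * hnorm ip k"
      using s(3) hnorm_nonneg[OF assms(2)] by (simp add: mult_right_mono)
    finally show ?thesis using \<open>e > 0\<close> by (simp add: algebra_simps)
  qed
  show ?thesis
  proof (rule ccontr)
    assume "ip x k \<noteq> 0"
    then have "cmod (ip x k) / (hnorm ip k + 1) > 0"
      using hnorm_nonneg[OF assms(2)] by simp
    from bound[OF this] show False
      using hnorm_nonneg[OF assms(2)] by (simp add: field_simps)
  qed
qed

lemma bounded_functional_add:
  "bounded_functional H ip L \<Longrightarrow> f \<in> H \<Longrightarrow> g \<in> H \<Longrightarrow> L (\<lambda>z. f z + g z) = L f + L g"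
  unfolding bounded_functional_def by blast

lemma bounded_functional_scale:
  "bounded_functional H ip L \<Longrightarrow> f \<in> H \<Longrightarrow> L (\<lambda>z. c * f z) = c * L f"
  unfolding bounded_functional_def by blast

lemma bounded_functional_diff:
  assumes "bounded_functional H ip L" "f \<in> H" "g \<in> H"
  shows "L (\<lambda>z. f z - g z) = L f - L g"
  using assms bounded_functional_add[OF assms(1) assms(2) scale_mem[OF assms(3), of "-1"]]
    bounded_functional_scale[OF assms(1,3), of "-1"]
  by simp

lemma bounded_functional_bound:
  assumes "bounded_functional H ip L"
  obtains C where "C \<ge> 0" "\<And>f. f \<in> H \<Longrightarrow> cmod (L f) \<le> C * hnorm ip f"
proof -
  obtain C where C: "\<And>f. f \<in> H \<Longrightarrow> cmod (L f) \<le> C * hnorm ip f"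
    using assms unfolding bounded_functional_def by blast
  have "cmod (L f) \<le> max C 0 * hnorm ip f" if "f \<in> H" for f
    using C[OF that] mult_right_mono[OF max.cobounded1 hnorm_nonneg[OF that], of C 0] by linarith
  then show ?thesis using that[of "max C 0"] by simp
qed

lemma minimizing_sequence_Cauchy:
  assumes A: "A \<subseteq> H" and mid: "\<And>x y. x \<in> A \<Longrightarrow> y \<in> A \<Longrightarrow> (\<lambda>z. (1/2) * (x z + y z)) \<in> A"
    and d: "d \<ge> 0" "\<And>y. y \<in> A \<Longrightarrow> d \<le> hnorm ip y"
    and X: "\<And>m. X m \<in> A" "\<And>m. hnorm ip (X m) < d + 1 / (real m + 1)"
  shows "\<forall>e>0. \<exists>N. \<forall>m\<ge>N. \<forall>n\<ge>N. hnorm ip (\<lambda>z. X m z - X n z) < e"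
proof (intro allI impI)
  fix e :: real
  assume e: "e > 0"
  have XH: "X m \<in> H" for m using X(1) A by blast
  define K where "K = 2 * d + 1"
  have K: "K > 0" unfolding K_def using d by simp
  have close: "hnorm ip (X m) ^ 2 \<le> d ^ 2 + K / (real m + 1)" for m
  proof -
    define \<delta> where "\<delta> = 1 / (real m + 1)"
    have \<delta>: "0 < \<delta>" "\<delta> \<le> 1" unfolding \<delta>_def by (auto simp: field_simps)
    have "hnorm ip (X m) ^ 2 \<le> (d + \<delta>) ^ 2"
      using X(2)[of m] hnorm_nonneg[OF XH] unfolding \<delta>_def by (intro power_mono) auto
    also have "\<dots> \<le> d ^ 2 + K * \<delta>"
      using \<delta> d unfolding K_def by (simp add: power2_eq_square algebra_simps mult_le_one)
    finally show ?thesis unfolding \<delta>_def by simp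
  qed
  have far: "4 * d ^ 2 \<le> hnorm ip (\<lambda>z. X m z + X n z) ^ 2" for m n
  proof -
    have "d \<le> hnorm ip (\<lambda>z. (1/2) * (X m z + X n z))" using d(2) mid X(1) by blast
    also have "\<dots> = hnorm ip (\<lambda>z. X m z + X n z) / 2"
      using hnorm_scale[OF add_mem[OF XH XH], of "1/2"] by simp
    finally show ?thesis using d power_mono[of "2 * d" _ 2] by (simp add: power_mult_distrib)
  qed
  have sq: "hnorm ip (\<lambda>z. X m z - X n z) ^ 2 \<le> 2 * K / (real m + 1) + 2 * K / (real n + 1)" for m n
    using parallelogram_law[OF XH XH, of m n] far[of m n] close[of m] close[of n] by simp
  obtain N :: nat where N: "real N > 4 * K / e ^ 2" using reals_Archimedean2 by blast
  have "4 * K / (real N + 1) < e ^ 2"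
    using N e by (simp add: field_simps) (smt (verit) mult_le_cancel_right_pos zero_less_power)
  have "hnorm ip (\<lambda>z. X m z - X n z) < e" if "m \<ge> N" "n \<ge> N" for m n
  proof -
    have "2 * K / (real m + 1) \<le> 2 * K / (real N + 1)" "2 * K / (real n + 1) \<le> 2 * K / (real N + 1)"
      using that K by (auto intro!: divide_left_mono)
    then have "hnorm ip (\<lambda>z. X m z - X n z) ^ 2 < e ^ 2"
      using sq[of m n] \<open>4 * K / (real N + 1) < e ^ 2\<close> by simp
    then show ?thesis using e by (simp add: power_less_imp_less_base)
  qed
  then show "\<exists>N. \<forall>m\<ge>N. \<forall>n\<ge>N. hnorm ip (\<lambda>z. X m z - X n z) < e" by blast
qed

lemma exists_min_norm_in_level_set:
  assumes L: "bounded_functional H ip L" and u: "u \<in> H" "L u \<noteq> 0"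
  shows "\<exists>w\<in>H. L w = 1 \<and> (\<forall>y\<in>H. L y = 1 \<longrightarrow> hnorm ip w \<le> hnorm ip y)"
proof -
  obtain C where C: "\<And>f. f \<in> H \<Longrightarrow> cmod (L f) \<le> C * hnorm ip f"
    using bounded_functional_bound[OF L] by blast
  define A where "A = {y \<in> H. L y = 1}"
  have "(\<lambda>z. (1 / L u) * u z) \<in> A"
    unfolding A_def using u scale_mem[OF u(1), of "1 / L u"] bounded_functional_scale[OF L u(1), of "1 / L u"]
    by simp
  then have A_ne: "hnorm ip ` A \<noteq> {}" by blast
  define d where "d = Inf (hnorm ip ` A)"
  have bdd: "bdd_below (hnorm ip ` A)"
    unfolding A_def by (rule bdd_belowI[of _ 0]) (auto simp: hnorm_nonneg)
  have d_le: "d \<le> hnorm ip y" if "y \<in> A" for y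
    unfolding d_def using bdd that by (simp add: cInf_lower)
  have d_nonneg: "d \<ge> 0"
    unfolding d_def A_def using A_ne by (intro cInf_greatest) (auto simp: A_def hnorm_nonneg)
  have "\<exists>y\<in>A. hnorm ip y < d + 1 / (real m + 1)" for m
    using cInf_lessD[OF A_ne, of "d + 1 / (real m + 1)"] unfolding d_def by auto
  then obtain X where X: "\<And>m. X m \<in> A" "\<And>m. hnorm ip (X m) < d + 1 / (real m + 1)"
    by metis
  have XH: "X m \<in> H" and LX: "L (X m) = 1" for m using X(1) unfolding A_def by auto
  have mid: "(\<lambda>z. (1/2) * (x z + y z)) \<in> A" if "x \<in> A" "y \<in> A" for x y
  proof -
    have xy: "x \<in> H" "y \<in> H" "L x = 1" "L y = 1" using that unfolding A_def by auto
    then have sum: "(\<lambda>z. x z + y z) \<in> H" by (simp add: add_mem)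
    have "L (\<lambda>z. (1/2) * (x z + y z)) = 1"
      using bounded_functional_scale[OF L sum, of "1/2"] bounded_functional_add[OF L xy(1,2)] xy
      by simp
    then show ?thesis unfolding A_def using scale_mem[OF sum, of "1/2"] by blast
  qed
  obtain w where w: "w \<in> H" and lim: "(\<lambda>n. hnorm ip (\<lambda>z. X n z - w z)) \<longlonglongrightarrow> 0"
    using complete[of X] XH
      minimizing_sequence_Cauchy[of A, OF _ mid d_nonneg d_le X] unfolding A_def by blast
  have "L w = 1"
  proof -
    have "cmod (1 - L w) \<le> C * hnorm ip (\<lambda>z. X n z - w z)" for n
      using C[OF diff_mem[OF XH w]] bounded_functional_diff[OF L XH w] LX by simp
    moreover have "(\<lambda>n. C * hnorm ip (\<lambda>z. X n z - w z)) \<longlonglongrightarrow> 0"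
      using tendsto_mult_right_zero[OF lim] .
    ultimately have "cmod (1 - L w) \<le> 0"
      using LIMSEQ_le_const by blast
    then show ?thesis by simp
  qed
  moreover have "hnorm ip w \<le> d"
  proof -
    have "hnorm ip w \<le> d + 1 / (real n + 1) + hnorm ip (\<lambda>z. X n z - w z)" for n
    proof -
      have "hnorm ip w \<le> hnorm ip (X n) + hnorm ip (\<lambda>z. w z - X n z)"
        using hnorm_add_le[OF XH[of n] diff_mem[OF w XH[of n]]] by simp
      then show ?thesis using X(2)[of n] hnorm_diff_commute[OF w XH] by simp
    qed
    moreover have "(\<lambda>n. d + 1 / (real n + 1) + hnorm ip (\<lambda>z. X n z - w z)) \<longlonglongrightarrow> d + 0 + 0"
      using LIMSEQ_inverse_real_of_nat
      by (intro tendsto_add tendsto_const lim) (simp add: inverse_eq_divide add.commute)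
    ultimately show ?thesis using LIMSEQ_le_const by fastforce
  qed
  ultimately show ?thesis using w d_le unfolding A_def by force
qed

lemma min_norm_orthogonal:
  assumes L: "bounded_functional H ip L"
    and w: "w \<in> H" "L w = 1" "\<And>y. y \<in> H \<Longrightarrow> L y = 1 \<Longrightarrow> hnorm ip w \<le> hnorm ip y"
    and x: "x \<in> H" "L x = 0"
  shows "ip x w = 0"
proof -
  define c where "c = ip x w"
  define Z where "Z = hnorm ip x ^ 2"
  define s where "s = 1 / (Z + 1)"
  have "Z \<ge> 0" unfolding Z_def by simp
  then have s: "s > 0" "s * Z \<le> 1" unfolding s_def by (auto simp: field_simps)
  define t where "t = - complex_of_real s * cnj c"
  have tx: "(\<lambda>z. t * x z) \<in> H" using x scale_mem by blast
  have "L (\<lambda>z. w z + t * x z) = 1"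
    using bounded_functional_add[OF L w(1) tx] bounded_functional_scale[OF L x(1)] w x by simp
  \<comment> \<open>\<open>w + t x\<close> competes with \<open>w\<close>, yet its squared norm is at most \<open>\<parallel>w\<parallel>\<^sup>2 - s |c|\<^sup>2\<close>\<close>
  then have "hnorm ip w ^ 2 \<le> hnorm ip (\<lambda>z. w z + t * x z) ^ 2"
    using w(3) add_mem[OF w(1) tx] hnorm_nonneg[OF w(1)] by (simp add: power_mono)
  also have "\<dots> = Re (ip (\<lambda>z. w z + t * x z) (\<lambda>z. w z + t * x z))"
    using hnorm_square add_mem[OF w(1) tx] by blast
  also have "ip (\<lambda>z. w z + t * x z) (\<lambda>z. w z + t * x z)
      = ip w w + t * cnj t * ip x x + cnj t * cnj c + cnj (cnj t * cnj c)"
    using ip_add_self[OF w(1) tx] ip_scale_left[OF x(1) tx] ip_scale_right[OF x(1) x(1)]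
      ip_scale_right[OF x(1) w(1)] ip_commute[OF x(1) w(1)]
    unfolding c_def by simp
  also have "Re \<dots> = hnorm ip w ^ 2 + s^2 * (cmod c)^2 * Z - 2 * s * (cmod c)^2"
    using ip_self_eq_hnorm[OF w(1)] ip_self_eq_hnorm[OF x(1)] unfolding t_def Z_def
    by (simp add: complex_mult_cnj cmod_def power2_eq_square algebra_simps)
  finally have "2 * s * (cmod c)^2 \<le> (s * Z) * (s * (cmod c)^2)"
    by (simp add: power2_eq_square algebra_simps)
  also have "\<dots> \<le> s * (cmod c)^2"
    using s mult_right_mono[of "s * Z" 1 "s * (cmod c)^2"] by simp
  finally have "s * (cmod c)^2 \<le> 0" by simp
  then show ?thesis using s(1) unfolding c_def by (simp add: mult_le_0_iff)
qed

theorem riesz_representation: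
  assumes L: "bounded_functional H ip L"
  shows "\<exists>k\<in>H. \<forall>x\<in>H. L x = ip x k"
proof (cases "\<forall>x\<in>H. L x = 0")
  case True
  then show ?thesis using zero_mem ip_zero_right by auto
next
  case False
  then obtain u where "u \<in> H" "L u \<noteq> 0" by blast
  then obtain w where w: "w \<in> H" "L w = 1" "\<And>y. y \<in> H \<Longrightarrow> L y = 1 \<Longrightarrow> hnorm ip w \<le> hnorm ip y"
    using exists_min_norm_in_level_set[OF L] by blast
  define W where "W = hnorm ip w ^ 2"
  have "W \<noteq> 0"
    using w(2) hnorm_eq_0_iff[OF w(1)] bounded_functional_scale[OF L w(1), of 0]
    unfolding W_def by auto
  define k where "k = (\<lambda>z. complex_of_real (1 / W) * w z)"
  have "L x = ip x k" if x: "x \<in> H" for x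
  proof -
    have Lxw: "(\<lambda>z. L x * w z) \<in> H" using scale_mem w(1) by blast
    have "L (\<lambda>z. x z - L x * w z) = 0"
      using bounded_functional_diff[OF L x Lxw] bounded_functional_scale[OF L w(1)] w(2) by simp
    then have "ip (\<lambda>z. x z - L x * w z) w = 0"
      using min_norm_orthogonal[OF L w] diff_mem[OF x Lxw] by blast
    then have "ip x w = L x * W"
      using ip_diff_left[OF x Lxw w(1)] ip_scale_left[OF w(1) w(1)] ip_self_eq_hnorm[OF w(1)]
      unfolding W_def by simp
    moreover have "ip x k = cnj (complex_of_real (1 / W)) * ip x w"
      unfolding k_def by (rule ip_scale_right[OF w(1) x])
    ultimately show ?thesis using \<open>W \<noteq> 0\<close> by simp
  qed
  moreover have "k \<in> H" unfolding k_def using scale_mem w(1) by blast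
  ultimately show ?thesis by blast
qed

lemma hclosure_subset_orth:
  assumes "S \<subseteq> orth ip H K" "K \<subseteq> H"
  shows "hclosure ip H S \<subseteq> orth ip H K"
proof
  fix x
  assume x: "x \<in> hclosure ip H S"
  have "ip x k = 0" if "k \<in> K" for k
  proof (rule orth_of_approx)
    show "x \<in> H" "k \<in> H" using x that assms(2) unfolding hclosure_def by auto
    show "\<exists>s\<in>H. ip s k = 0 \<and> hnorm ip (\<lambda>z. x z - s z) < e" if "e > 0" for e
      using x \<open>e > 0\<close> \<open>k \<in> K\<close> assms(1) unfolding hclosure_def orth_def by fast
  qed
  then show "x \<in> orth ip H K" using x unfolding hclosure_def orth_def by blast
qed

lemma orth_cspan: "K \<subseteq> H \<Longrightarrow> orth ip H (cspan K) = orth ip H K"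
proof
  show "orth ip H (cspan K) \<subseteq> orth ip H K"
    unfolding orth_def using cspan_superset by blast
  assume "K \<subseteq> H"
  show "orth ip H K \<subseteq> orth ip H (cspan K)"
  proof
    fix x
    assume x: "x \<in> orth ip H K"
    then have "x \<in> H" unfolding orth_def by blast
    have "cspan K \<subseteq> {k \<in> H. ip x k = 0}"
      using x \<open>K \<subseteq> H\<close> unfolding orth_def
      by (intro cspan_minimal)
        (auto simp: zero_mem add_mem scale_mem ip_zero_right ip_add_right ip_scale_right \<open>x \<in> H\<close>)
    then show "x \<in> orth ip H (cspan K)" using \<open>x \<in> H\<close> unfolding orth_def by blast
  qed
qed

text \<open>For \<open>x\<close> orthogonal to the \<open>k\<^sub>i\<close> and \<open>p\<close> close to \<open>x\<close>, the coefficients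
  \<open>\<langle>p, k\<^sub>i\<rangle> = \<langle>p - x, k\<^sub>i\<rangle>\<close> are small, so the correction keeps \<open>p\<close> close to \<open>x\<close>.\<close>
lemma orth_subset_hclosure:
  assumes I: "finite I" and k: "\<And>i. i \<in> I \<Longrightarrow> k i \<in> H" and h: "\<And>i. i \<in> I \<Longrightarrow> h i \<in> H"
    and P: "P \<subseteq> H" "\<And>x e. x \<in> H \<Longrightarrow> e > 0 \<Longrightarrow> \<exists>p\<in>P. hnorm ip (\<lambda>z. x z - p z) < e"
    and correct: "\<And>p. p \<in> P \<Longrightarrow> (\<lambda>z. p z - (\<Sum>i\<in>I. ip p (k i) * h i z)) \<in> S"
  shows "orth ip H (k ` I) \<subseteq> hclosure ip H S"
proof
  fix x
  assume "x \<in> orth ip H (k ` I)"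
  then have x: "x \<in> H" and xk: "\<And>i. i \<in> I \<Longrightarrow> ip x (k i) = 0" unfolding orth_def by auto
  define M where "M = 1 + (\<Sum>i\<in>I. hnorm ip (k i) * hnorm ip (h i))"
  have M: "M \<ge> 1" unfolding M_def using k h by (auto intro!: sum_nonneg simp: hnorm_nonneg)
  have "\<exists>s\<in>S. hnorm ip (\<lambda>z. x z - s z) < e" if e: "e > 0" for e
  proof -
    obtain p where p: "p \<in> P" "hnorm ip (\<lambda>z. x z - p z) < e / M"
      using P(2)[OF x, of "e / M"] e M by auto
    have pH: "p \<in> H" using p(1) P(1) by blast
    define g where "g i = (\<lambda>z. ip p (k i) * h i z)" for i
    have g: "g i \<in> H" if "i \<in> I" for i unfolding g_def using h[OF that] by (rule scale_mem)
    have coeff: "cmod (ip p (k i)) \<le> e / M * hnorm ip (k i)" if "i \<in> I" for i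
    proof -
      have "cmod (ip p (k i)) = cmod (ip x (k i) - ip p (k i))" using xk[OF that] by simp
      also have "\<dots> \<le> hnorm ip (\<lambda>z. x z - p z) * hnorm ip (k i)"
        using norm_ip_diff_le[OF x pH k[OF that]] .
      also have "\<dots> \<le> e / M * hnorm ip (k i)"
        using p(2) hnorm_nonneg[OF k[OF that]] by (intro mult_right_mono) simp_all
      finally show ?thesis .
    qed
    have "hnorm ip (\<lambda>z. x z - (p z - (\<Sum>i\<in>I. g i z)))
          \<le> hnorm ip (\<lambda>z. x z - p z) + hnorm ip (\<lambda>z. \<Sum>i\<in>I. g i z)"
      using hnorm_add_le[OF diff_mem[OF x pH] sum_mem[OF I g]] by (simp add: algebra_simps)
    also have "hnorm ip (\<lambda>z. \<Sum>i\<in>I. g i z) \<le> (\<Sum>i\<in>I. cmod (ip p (k i)) * hnorm ip (h i))"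
      using hnorm_sum_le[OF I g] by (simp add: g_def hnorm_scale h)
    also have "\<dots> \<le> (\<Sum>i\<in>I. e / M * (hnorm ip (k i) * hnorm ip (h i)))"
    proof (rule sum_mono)
      fix i
      assume "i \<in> I"
      then show "cmod (ip p (k i)) * hnorm ip (h i) \<le> e / M * (hnorm ip (k i) * hnorm ip (h i))"
        using mult_right_mono[OF coeff hnorm_nonneg[OF h]] by (simp add: mult.assoc)
    qed
    also have "\<dots> = e / M * (M - 1)" unfolding M_def by (simp add: sum_distrib_left)
    finally have "hnorm ip (\<lambda>z. x z - (p z - (\<Sum>i\<in>I. g i z))) < e / M + e / M * (M - 1)"
      using p(2) by simp
    also have "\<dots> = e" using M by (simp add: field_simps)
    finally show ?thesis
      using correct[OF p(1)] unfolding g_def by (intro bexI[of _ "\<lambda>z. p z - (\<Sum>i\<in>I. ip p (k i) * h i z)"])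
  qed
  then show "x \<in> hclosure ip H S" unfolding hclosure_def using x by blast
qed

end

section \<open>Higher derivatives and Hermite interpolation\<close>

lemma pderiv_linear_monic: "pderiv [:-b, 1:] = (1 :: 'a::idom poly)"
  by (simp add: pderiv_pCons)

lemma higher_pderiv_diff: "(pderiv ^^ n) (p - q) = (pderiv ^^ n) p - (pderiv ^^ n) (q :: 'a::idom poly)"
  by (induction n) (simp_all add: pderiv_diff)

lemma power_dvd_iff_higher_pderiv_eq_0:
  fixes p :: "'a::{idom,semiring_char_0} poly"
  shows "[:-a, 1:] ^ r dvd p \<longleftrightarrow> (\<forall>l<r. poly ((pderiv ^^ l) p) a = 0)"
proof (induction r arbitrary: p)
  case 0
  then show ?case by simp
next
  case (Suc r)
  have step: "[:-a, 1:] ^ Suc r dvd p \<longleftrightarrow> poly p a = 0 \<and> [:-a, 1:] ^ r dvd pderiv p"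
  proof (cases "p = 0 \<or> poly p a \<noteq> 0")
    case True
    then show ?thesis by (auto simp: order_divides dest: order_0I)
  next
    case False
    have "pderiv p \<noteq> 0"
    proof
      assume "pderiv p = 0"
      then obtain c where "p = [:c:]" using pderiv_eq_0_iff degree_eq_zeroE by blast
      with False show False by simp
    qed
    moreover have "order a p = Suc (order a (pderiv p))" using False order_pderiv by blast
    ultimately show ?thesis using False unfolding order_divides by simp
  qed
  have "(\<forall>l<Suc r. poly ((pderiv ^^ l) p) a = 0) \<longleftrightarrow>
        poly p a = 0 \<and> (\<forall>l<r. poly ((pderiv ^^ l) (pderiv p)) a = 0)"
    by (simp only: All_less_Suc2 funpow_0 funpow_Suc_right o_apply id_apply)
  then show ?case using step Suc.IH by simp
qed

lemma higher_pderiv_mult_unit_slope: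
  fixes p q :: "'a::idom poly"
  assumes "pderiv q = 1"
  shows "(pderiv ^^ Suc m) (q * p) = q * (pderiv ^^ Suc m) p + smult (of_nat (Suc m)) ((pderiv ^^ m) p)"
proof (induction m)
  case 0
  then show ?case using assms by (simp add: pderiv_mult)
next
  case (Suc m)
  have "(pderiv ^^ Suc (Suc m)) (q * p) = pderiv ((pderiv ^^ Suc m) (q * p))"
    by (simp only: funpow.simps(2) o_apply)
  also have "\<dots> = (pderiv ^^ Suc m) p + q * (pderiv ^^ Suc (Suc m)) p
                   + smult (of_nat (Suc m)) ((pderiv ^^ Suc m) p)"
    unfolding Suc.IH using assms by (simp add: pderiv_mult pderiv_add pderiv_smult del: of_nat_Suc)
  also have "\<dots> = q * (pderiv ^^ Suc (Suc m)) p + smult (of_nat (Suc (Suc m))) ((pderiv ^^ Suc m) p)"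
    by (simp only: of_nat_Suc[of "Suc m"] smult_add_left smult_1_left add_ac)
  finally show ?case .
qed

lemma poly_higher_pderiv_linear_mult:
  fixes p :: "'a::idom poly"
  shows "poly ((pderiv ^^ Suc m) ([:-b, 1:] * p)) b = of_nat (Suc m) * poly ((pderiv ^^ m) p) b"
  unfolding higher_pderiv_mult_unit_slope[of "[:-b, 1:]", OF pderiv_linear_monic]
  by (simp del: mult_pCons_left)

lemma higher_pderiv_linear_power_self:
  "(pderiv ^^ n) ([:-a, 1:] ^ n) = [:fact n :: 'a::{idom,semiring_char_0}:]"
proof (induction n)
  case 0
  then show ?case by simp
next
  case (Suc n)
  have "(pderiv ^^ Suc n) ([:-a, 1:] ^ Suc n) = (pderiv ^^ n) (smult (of_nat (Suc n)) ([:-a, 1:] ^ n))"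
    unfolding funpow_Suc_right comp_def pderiv_power_Suc pderiv_linear_monic by simp
  also have "\<dots> = [:fact (Suc n):]"
    by (simp add: higher_pderiv_smult Suc.IH)
  finally show ?case .
qed

lemma taylor_interpolation:
  fixes d :: "nat \<Rightarrow> 'a::field_char_0"
  shows "\<exists>T. \<forall>l<r. poly ((pderiv ^^ l) T) a = d l"
proof (induction r)
  case 0
  then show ?case by simp
next
  case (Suc r)
  then obtain T where T: "\<forall>l<r. poly ((pderiv ^^ l) T) a = d l" by blast
  \<comment> \<open>adding a multiple of \<open>(x - a)\<^sup>r\<close> leaves the derivatives of order below \<open>r\<close> at \<open>a\<close> unchanged\<close>
  define T' where "T' = T + smult ((d r - poly ((pderiv ^^ r) T) a) / fact r) ([:-a, 1:] ^ r)"
  have low: "poly ((pderiv ^^ l) ([:-a, 1:] ^ r)) a = 0" if "l < r" for l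
    using power_dvd_iff_higher_pderiv_eq_0[of a r "[:-a, 1:] ^ r"] that by simp
  have "poly ((pderiv ^^ l) T') a = d l" if "l < Suc r" for l
    using that T low[of l]
    by (cases "l = r") (simp_all add: T'_def higher_pderiv_add higher_pderiv_smult
        higher_pderiv_linear_power_self)
  then show ?case by blast
qed

lemma coprime_linear_powers:
  fixes a b :: "'a::field_gcd"
  assumes "a \<noteq> b"
  shows "coprime ([:-a, 1:] ^ m) ([:-b, 1:] ^ n)"
proof -
  have "\<not> [:-a, 1:] dvd [:-b, 1:]"
    using assms by (simp add: poly_eq_0_iff_dvd[symmetric])
  then have "coprime [:-a, 1:] [:-b, 1:]"
    by (intro prime_elem_imp_coprime prime_elem_linear_field_poly) simp_all
  then show ?thesis by simp
qed

lemma chinese_remainder_coprime: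
  fixes R Q :: "'a::euclidean_ring_gcd"
  assumes "coprime R Q"
  shows "\<exists>h. R dvd h - a \<and> Q dvd h - b"
proof -
  define v where "v = fst (bezout_coefficients R Q)"
  define u where "u = snd (bezout_coefficients R Q)"
  have bezout: "v * R + u * Q = 1"
    using bezout_coefficients_fst_snd[of R Q] assms unfolding u_def v_def
    by (simp add: coprime_iff_gcd_eq_1)
  define h where "h = a + (b - a) * v * R"
  have "h - b = (a - b) * u * Q"
  proof -
    have "h - b = (b - a) * (v * R - 1)" unfolding h_def by (simp add: algebra_simps)
    also have "v * R - 1 = - (u * Q)" using bezout by (simp add: algebra_simps)
    finally show ?thesis by (simp add: algebra_simps)
  qed
  then have "R dvd h - a \<and> Q dvd h - b" unfolding h_def by simp
  then show ?thesis by blast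
qed

lemma higher_pderivs_eq_if_power_dvd_diff:
  fixes p q :: "'a::{idom,semiring_char_0} poly"
  assumes "[:-a, 1:] ^ r dvd p - q" "l < r"
  shows "poly ((pderiv ^^ l) p) a = poly ((pderiv ^^ l) q) a"
  using assms power_dvd_iff_higher_pderiv_eq_0[of a r "p - q"] by (simp add: higher_pderiv_diff)

lemma hermite_interpolation:
  fixes \<beta> :: "'b \<Rightarrow> 'a::{field_char_0,field_gcd}"
  assumes "finite J" "inj_on \<beta> J"
  shows "\<exists>h. \<forall>j\<in>J. \<forall>l<r j. poly ((pderiv ^^ l) h) (\<beta> j) = d j l"
  using assms
proof (induction J rule: finite_induct)
  case empty
  then show ?case by simp
next
  case (insert j0 J)
  then obtain h0 where h0: "\<forall>j\<in>J. \<forall>l<r j. poly ((pderiv ^^ l) h0) (\<beta> j) = d j l"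
    by auto
  obtain T where T: "\<forall>l<r j0. poly ((pderiv ^^ l) T) (\<beta> j0) = d j0 l"
    using taylor_interpolation by blast
  define R where "R = [:-\<beta> j0, 1:] ^ r j0"
  define Q where "Q = (\<Prod>j\<in>J. [:-\<beta> j, 1:] ^ r j)"
  have "\<beta> j0 \<noteq> \<beta> j" if "j \<in> J" for j
    using insert.prems insert.hyps(2) that by auto
  then have "coprime R Q"
    unfolding R_def Q_def by (intro prod_coprime_right coprime_linear_powers) simp
  then obtain h where h: "R dvd h - T" "Q dvd h - h0"
    using chinese_remainder_coprime by blast
  have "poly ((pderiv ^^ l) h) (\<beta> j) = d j l" if "j \<in> insert j0 J" "l < r j" for j l
  proof (cases "j = j0")
    case True
    then show ?thesis
      using higher_pderivs_eq_if_power_dvd_diff[OF h(1)[unfolded R_def]] T that by simp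
  next
    case False
    with that have j: "j \<in> J" by simp
    have "[:-\<beta> j, 1:] ^ r j dvd Q" unfolding Q_def using insert.hyps(1) j by (rule dvd_prodI)
    then have "[:-\<beta> j, 1:] ^ r j dvd h - h0" using h(2) by (rule dvd_trans)
    then show ?thesis
      using higher_pderivs_eq_if_power_dvd_diff[OF _ that(2)] h0 j that(2) by fastforce
  qed
  then show ?case by blast
qed

lemma prod_dvd_if_pairwise_coprime:
  fixes q :: "'b \<Rightarrow> 'a::semiring_gcd"
  assumes "finite A" "\<And>x. x \<in> A \<Longrightarrow> q x dvd p"
    and "\<And>x y. x \<in> A \<Longrightarrow> y \<in> A \<Longrightarrow> x \<noteq> y \<Longrightarrow> coprime (q x) (q y)"
  shows "prod q A dvd p"
  using assms
proof (induction A rule: finite_induct)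
  case empty
  then show ?case by simp
next
  case (insert x A)
  have "coprime (q x) (prod q A)"
    using insert.prems(2) insert.hyps(2) by (intro prod_coprime_right) auto
  with insert show ?case by (simp add: divides_mult)
qed

lemma dvd_if_order_le:
  fixes f p :: "complex poly"
  assumes "f \<noteq> 0" "\<And>a. order a f \<le> order a p"
  shows "f dvd p"
proof (cases "p = 0")
  case False
  have "(\<Prod>z | poly f z = 0. [:-z, 1:] ^ order z f) dvd p"
  proof (rule prod_dvd_if_pairwise_coprime)
    show "finite {z. poly f z = 0}" using poly_roots_finite[OF assms(1)] .
    show "[:-z, 1:] ^ order z f dvd p" for z
      using assms(2)[of z] by (simp add: order_divides)
    show "coprime ([:-z, 1:] ^ order z f) ([:-w, 1:] ^ order w f)" if "z \<noteq> w" for z w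
      using that by (rule coprime_linear_powers)
  qed
  then have "smult (lead_coeff f) (\<Prod>z | poly f z = 0. [:-z, 1:] ^ order z f) dvd p"
    using assms(1) by (simp add: smult_dvd)
  then show ?thesis by (simp only: complex_poly_decompose)
qed simp

lemma dvd_iff_higher_pderivs_vanish:
  fixes f p :: "complex poly"
  assumes "f \<noteq> 0" "\<And>j. j \<in> J \<Longrightarrow> order (\<beta> j) f = r j" "\<And>a. a \<notin> \<beta> ` J \<Longrightarrow> order a f = 0"
  shows "f dvd p \<longleftrightarrow> (\<forall>j\<in>J. \<forall>l<r j. poly ((pderiv ^^ l) p) (\<beta> j) = 0)"
proof
  assume "f dvd p"
  have "[:-\<beta> j, 1:] ^ r j dvd p" if "j \<in> J" for j
  proof -
    have "[:-\<beta> j, 1:] ^ r j dvd f" using order_1[of "\<beta> j" f] assms(2)[OF that] by simp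
    then show ?thesis using \<open>f dvd p\<close> by (rule dvd_trans)
  qed
  then show "\<forall>j\<in>J. \<forall>l<r j. poly ((pderiv ^^ l) p) (\<beta> j) = 0"
    by (simp add: power_dvd_iff_higher_pderiv_eq_0)
next
  assume vanish: "\<forall>j\<in>J. \<forall>l<r j. poly ((pderiv ^^ l) p) (\<beta> j) = 0"
  show "f dvd p"
  proof (cases "p = 0")
    case False
    have "order a f \<le> order a p" for a
    proof (cases "a \<in> \<beta> ` J")
      case True
      then obtain j where "j \<in> J" "a = \<beta> j" by blast
      then show ?thesis
        using vanish False assms(2) power_dvd_iff_higher_pderiv_eq_0[of a "r j" p]
        by (simp add: order_divides)
    qed (simp add: assms(3))
    then show ?thesis using dvd_if_order_le[OF assms(1)] by blast
  qed simp
qed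

section \<open>Reproducible points and their kernels\<close>

locale std_function_space =
  fixes \<Omega> :: "complex set" and H :: "cfun set" and ip :: "cfun \<Rightarrow> cfun \<Rightarrow> complex"
  assumes std: "std_space \<Omega> H ip"

sublocale std_function_space \<subseteq> fun_hilbert_space H ip
  using std unfolding std_space_def by unfold_locales blast

context std_function_space
begin

lemma pfun_mem: "pfun \<Omega> p \<in> H"
  using std unfolding std_space_def by blast

lemma polys_dense: "f \<in> H \<Longrightarrow> e > 0 \<Longrightarrow> \<exists>p. hnorm ip (\<lambda>z. f z - pfun \<Omega> p z) < e"
  using std unfolding std_space_def by blast

lemma shift_mem: "f \<in> H \<Longrightarrow> (\<lambda>z. z * f z) \<in> H"
  using std unfolding std_space_def by blast

lemma shift_bounded: obtains C where "\<And>f. f \<in> H \<Longrightarrow> hnorm ip (\<lambda>z. z * f z) \<le> C * hnorm ip f"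
  using std unfolding std_space_def by blast

lemma eq_0_if_orth_polys:
  assumes "k \<in> H" "\<And>p. ip (pfun \<Omega> p) k = 0"
  shows "k = (\<lambda>z. 0)"
proof -
  have "ip k k = 0"
    using assms polys_dense[OF assms(1)] pfun_mem by (intro orth_of_approx) blast+
  then show ?thesis using ip_self_eq_0 assms(1) by blast
qed

lemma kernel_reproduces:
  assumes "reproducible \<Omega> H ip \<beta> m"
  shows "kernel \<Omega> H ip \<beta> m \<in> H \<and> (\<forall>p. ip (pfun \<Omega> p) (kernel \<Omega> H ip \<beta> m) = poly ((pderiv ^^ m) p) \<beta>)"
proof -
  define R where "R k \<longleftrightarrow> k \<in> H \<and> (\<forall>p. ip (pfun \<Omega> p) k = poly ((pderiv ^^ m) p) \<beta>)" for k
  obtain L where L: "bounded_functional H ip L" "\<And>p. L (pfun \<Omega> p) = poly ((pderiv ^^ m) p) \<beta>"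
    using assms unfolding reproducible_iff_bounded_functional by blast
  then obtain k where "R k"
    unfolding R_def using riesz_representation[OF L(1)] pfun_mem by metis
  \<comment> \<open>density of the polynomials makes the representer unique, so \<open>THE\<close> in \<open>kernel\<close> picks it\<close>
  moreover have "k' = k" if "R k'" for k'
  proof -
    have "(\<lambda>z. k' z - k z) = (\<lambda>z. 0)"
      using \<open>R k\<close> \<open>R k'\<close> unfolding R_def
      by (intro eq_0_if_orth_polys) (simp_all add: diff_mem ip_diff_right pfun_mem)
    then show ?thesis by (simp add: fun_eq_iff)
  qed
  ultimately have "R (THE k. R k)" by (rule theI)
  then show ?thesis unfolding R_def kernel_def .
qed

lemma bounded_functional_shift:
  assumes "bounded_functional H ip L"
  shows "bounded_functional H ip (\<lambda>f. c * L (\<lambda>z. (z - b) * f z))"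
proof -
  have T: "(\<lambda>z. (z - b) * f z) \<in> H" if "f \<in> H" for f
    using diff_mem[OF shift_mem[OF that] scale_mem[OF that, of b]] by (simp add: algebra_simps)
  obtain C where C: "C \<ge> 0" "\<And>f. f \<in> H \<Longrightarrow> cmod (L f) \<le> C * hnorm ip f"
    using bounded_functional_bound[OF assms] by blast
  obtain S where S: "\<And>f. f \<in> H \<Longrightarrow> hnorm ip (\<lambda>z. z * f z) \<le> S * hnorm ip f"
    using shift_bounded by blast
  have bound: "cmod (c * L (\<lambda>z. (z - b) * f z)) \<le> (cmod c * C * (S + cmod b)) * hnorm ip f"
    if f: "f \<in> H" for f
  proof -
    have "hnorm ip (\<lambda>z. (z - b) * f z) \<le> hnorm ip (\<lambda>z. z * f z) + hnorm ip (\<lambda>z. (- b) * f z)"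
      using hnorm_add_le[OF shift_mem[OF f] scale_mem[OF f, of "-b"]] by (simp add: algebra_simps)
    also have "\<dots> \<le> (S + cmod b) * hnorm ip f"
      using S[OF f] hnorm_scale[OF f, of "-b"] by (simp add: algebra_simps)
    finally have "cmod (L (\<lambda>z. (z - b) * f z)) \<le> C * ((S + cmod b) * hnorm ip f)"
      using C(2)[OF T[OF f]] mult_left_mono[OF _ C(1)] by (meson order_trans)
    then show ?thesis
      by (simp add: norm_mult mult.assoc mult_left_mono)
  qed
  have add: "c * L (\<lambda>z. (z - b) * (f z + g z)) = c * L (\<lambda>z. (z - b) * f z) + c * L (\<lambda>z. (z - b) * g z)"
    if "f \<in> H" "g \<in> H" for f g
  proof -
    have "(\<lambda>z. (z - b) * (f z + g z)) = (\<lambda>z. (z - b) * f z + (z - b) * g z)"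
      by (simp add: algebra_simps)
    then show ?thesis using bounded_functional_add[OF assms T T] that by (simp add: algebra_simps)
  qed
  have scale: "c * L (\<lambda>z. (z - b) * (a * f z)) = a * (c * L (\<lambda>z. (z - b) * f z))"
    if "f \<in> H" for a f
  proof -
    have "(\<lambda>z. (z - b) * (a * f z)) = (\<lambda>z. a * ((z - b) * f z))"
      by (simp add: algebra_simps)
    then show ?thesis using bounded_functional_scale[OF assms T] that by simp
  qed
  show ?thesis
    unfolding bounded_functional_def using bound add scale by blast
qed

lemma reproducible_SucD:
  assumes "reproducible \<Omega> H ip \<beta> (Suc m)"
  shows "reproducible \<Omega> H ip \<beta> m"
proof -
  obtain L where L: "bounded_functional H ip L" "\<And>p. L (pfun \<Omega> p) = poly ((pderiv ^^ Suc m) p) \<beta>"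
    using assms unfolding reproducible_iff_bounded_functional by blast
  \<comment> \<open>Leibniz: \<open>((z - \<beta>) p)\<^bsup>(m+1)\<^esup>(\<beta>) = (m + 1) p\<^bsup>(m)\<^esup>(\<beta>)\<close>\<close>
  have "L (\<lambda>z. (z - \<beta>) * pfun \<Omega> p z) / of_nat (Suc m) = poly ((pderiv ^^ m) p) \<beta>" for p
  proof -
    have "(\<lambda>z. (z - \<beta>) * pfun \<Omega> p z) = pfun \<Omega> ([:-\<beta>, 1:] * p)"
      by (auto simp: pfun_def algebra_simps)
    then show ?thesis
      using L(2) poly_higher_pderiv_linear_mult[of m \<beta> p] by (simp del: of_nat_Suc)
  qed
  then show ?thesis
    unfolding reproducible_iff_bounded_functional
    using bounded_functional_shift[OF L(1), of "1 / of_nat (Suc m)" \<beta>] by (auto simp: field_simps)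
qed

lemma reproducible_le:
  assumes "reproducible \<Omega> H ip \<beta> m" "l \<le> m"
  shows "reproducible \<Omega> H ip \<beta> l"
proof -
  have "reproducible \<Omega> H ip \<beta> (l + k) \<Longrightarrow> reproducible \<Omega> H ip \<beta> l" for k
    by (induction k) (auto dest: reproducible_SucD)
  then show ?thesis using assms le_add_diff_inverse by metis
qed

lemma reproducible_if_le_ro:
  assumes "reproducible \<Omega> H ip \<beta> 0" "enat (Suc l) \<le> ro \<Omega> H ip \<beta> + 1"
  shows "reproducible \<Omega> H ip \<beta> l"
proof (rule ccontr)
  assume "\<not> reproducible \<Omega> H ip \<beta> l"
  then have below: "m < l" if "reproducible \<Omega> H ip \<beta> m" for m
    using reproducible_le[OF that] by (meson not_le)
  then have "l \<ge> 1" using assms(1) by fastforce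
  have "ro \<Omega> H ip \<beta> \<le> enat (l - 1)"
    unfolding ro_def by (rule Sup_least) (force dest: below)
  then have "ro \<Omega> H ip \<beta> + 1 \<le> enat l"
    using \<open>l \<ge> 1\<close> add_right_mono[of _ "enat (l - 1)" 1] by (simp add: one_enat_def)
  with assms(2) have "enat (Suc l) \<le> enat l" by (rule order_trans)
  then show False by simp
qed

end

lemma finite_order_pos: "f \<noteq> 0 \<Longrightarrow> finite {x. 0 < order x f}"
  by (rule finite_subset[OF _ poly_roots_finite[of f]]) (auto simp: order_root)

lemma count_Zmset: "f \<noteq> 0 \<Longrightarrow> count (Zmset f) a = order a f"
  unfolding Zmset_def by (simp add: finite_order_pos)

lemma order_if_Zmset_eq_replicates:
  assumes "f \<noteq> 0" "finite J" "inj_on \<beta> J" "Zmset f = (\<Sum>j\<in>J. replicate_mset (r j) (\<beta> j))"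
  shows "j \<in> J \<Longrightarrow> order (\<beta> j) f = r j" and "a \<notin> \<beta> ` J \<Longrightarrow> order a f = 0"
proof -
  have order: "order a f = (\<Sum>j\<in>J. if a = \<beta> j then r j else 0)" for a
    using assms(1,4) by (simp flip: count_Zmset add: count_sum)
  show "order (\<beta> j) f = r j" if "j \<in> J"
  proof -
    have "order (\<beta> j) f = (\<Sum>i\<in>J. if i = j then r i else 0)"
      unfolding order using assms(3) that by (intro sum.cong) (auto simp: inj_on_eq_iff)
    then show ?thesis using assms(2) that by simp
  qed
  show "order a f = 0" if "a \<notin> \<beta> ` J"
    unfolding order using that by (auto intro!: sum.neutral)
qed

lemma count_Rmset:
  assumes "f \<noteq> 0"
  shows "count (Rmset \<Omega> H ip f) a =
    (if reproducible \<Omega> H ip a 0 \<and> order a f \<ge> 1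
     then the_enat (min (enat (order a f)) (ro \<Omega> H ip a + 1)) else 0)"
proof -
  from finite_order_pos[OF assms] have "finite {x. 0 < (if reproducible \<Omega> H ip x 0 \<and> order x f \<ge> 1
      then the_enat (min (enat (order x f)) (ro \<Omega> H ip x + 1)) else 0)}"
    by (rule finite_subset[rotated]) (auto split: if_splits)
  then show ?thesis unfolding Rmset_def by simp
qed

context std_function_space
begin

lemma reproducible_if_Rmset_eq_Zmset:
  assumes "f \<noteq> 0" "Rmset \<Omega> H ip f = Zmset f" "l < order \<beta> f"
  shows "reproducible \<Omega> H ip \<beta> l"
proof -
  have "count (Rmset \<Omega> H ip f) \<beta> = order \<beta> f"
    using assms(1,2) count_Zmset by simp
  then have rep0: "reproducible \<Omega> H ip \<beta> 0"
    and "the_enat (min (enat (order \<beta> f)) (ro \<Omega> H ip \<beta> + 1)) = order \<beta> f"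
    using assms(3) count_Rmset[OF assms(1)] by (auto split: if_splits)
  then have "enat (order \<beta> f) \<le> ro \<Omega> H ip \<beta> + 1"
    by (cases "ro \<Omega> H ip \<beta> + 1") auto
  moreover have "enat (Suc l) \<le> enat (order \<beta> f)" using assms(3) by simp
  ultimately show ?thesis
    using reproducible_if_le_ro[OF rep0] order_trans by blast
qed

theorem cyclic_eq_orth_kernels:
  fixes \<beta> :: "'b \<Rightarrow> complex" and r :: "'b \<Rightarrow> nat"
  assumes f: "f \<noteq> 0" and J: "finite J" "inj_on \<beta> J"
    and order: "\<And>j. j \<in> J \<Longrightarrow> order (\<beta> j) f = r j" "\<And>a. a \<notin> \<beta> ` J \<Longrightarrow> order a f = 0"
    and rep: "\<And>j l. j \<in> J \<Longrightarrow> l < r j \<Longrightarrow> reproducible \<Omega> H ip (\<beta> j) l"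
  shows "cyclic ip H (pfun \<Omega> f) = orth ip H (cspan {kernel \<Omega> H ip (\<beta> j) l | j l. j \<in> J \<and> l < r j})"
proof -
  define I where "I = Sigma J (\<lambda>j. {..<r j})"
  define k where "k i = kernel \<Omega> H ip (\<beta> (fst i)) (snd i)" for i
  have I: "finite I" unfolding I_def using J(1) by simp
  have k: "k i \<in> H" "\<And>p. ip (pfun \<Omega> p) (k i) = poly ((pderiv ^^ snd i) p) (\<beta> (fst i))"
    if "i \<in> I" for i
    using kernel_reproduces[OF rep] that unfolding I_def k_def by auto
  have kernels: "{kernel \<Omega> H ip (\<beta> j) l | j l. j \<in> J \<and> l < r j} = k ` I"
    unfolding I_def k_def by force
  have dvd_iff: "f dvd p \<longleftrightarrow> (\<forall>i\<in>I. ip (pfun \<Omega> p) (k i) = 0)" for p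
    using dvd_iff_higher_pderivs_vanish[of f J \<beta> r p, OF f order] k(2) unfolding I_def by auto
  have cyclic: "cyclic ip H (pfun \<Omega> f) = hclosure ip H (range (\<lambda>q. pfun \<Omega> (f * q)))"
    unfolding cyclic_def cspan_shifts_eq ..
  have "pfun \<Omega> (f * q) \<in> orth ip H (k ` I)" for q
    using dvd_iff[of "f * q"] pfun_mem unfolding orth_def by auto
  then have "range (\<lambda>q. pfun \<Omega> (f * q)) \<subseteq> orth ip H (k ` I)" by blast
  moreover have kH: "k ` I \<subseteq> H" using k(1) by blast
  ultimately have "cyclic ip H (pfun \<Omega> f) \<subseteq> orth ip H (k ` I)"
    unfolding cyclic by (rule hclosure_subset_orth)
  moreover have "orth ip H (k ` I) \<subseteq> cyclic ip H (pfun \<Omega> f)"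
  proof -
    have "\<forall>i. \<exists>h. \<forall>j\<in>J. \<forall>l<r j. poly ((pderiv ^^ l) h) (\<beta> j) = (if (j, l) = i then 1 else 0)"
    proof
      fix i :: "'b \<times> nat"
      show "\<exists>h. \<forall>j\<in>J. \<forall>l<r j. poly ((pderiv ^^ l) h) (\<beta> j) = (if (j, l) = i then 1 else 0)"
        using hermite_interpolation[OF J, of r "\<lambda>j l. if (j, l) = i then 1 else 0"] .
    qed
    then obtain b where b: "\<forall>i. \<forall>j\<in>J. \<forall>l<r j.
        poly ((pderiv ^^ l) (b i)) (\<beta> j) = (if (j, l) = i then 1 else 0)"
      by (rule choice[THEN exE])
    \<comment> \<open>subtracting \<open>\<Sum>\<^sub>i \<langle>p, k\<^sub>i\<rangle> b\<^sub>i\<close> kills the Hermite data of \<open>p\<close> at the zeros of \<open>f\<close>\<close>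
    have correct: "(\<lambda>z. pfun \<Omega> p z - (\<Sum>i\<in>I. ip (pfun \<Omega> p) (k i) * pfun \<Omega> (b i) z))
        \<in> range (\<lambda>q. pfun \<Omega> (f * q))" for p
    proof -
      define c where "c i = ip (pfun \<Omega> p) (k i)" for i
      define g where "g = p - (\<Sum>i\<in>I. smult (c i) (b i))"
      have "ip (pfun \<Omega> g) (k i') = 0" if "i' \<in> I" for i'
      proof -
        have "ip (pfun \<Omega> g) (k i') = c i' - (\<Sum>i\<in>I. c i * (if i' = i then 1 else 0))"
          using that k(2) b unfolding g_def c_def I_def
          by (auto simp: higher_pderiv_diff higher_pderiv_sum higher_pderiv_smult poly_sum
              intro!: sum.cong)
        also have "\<dots> = 0" using I that by (simp add: if_distrib cong: if_cong)
        finally show ?thesis .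
      qed
      then obtain q where "g = f * q" using dvd_iff by blast
      moreover have "(\<lambda>z. pfun \<Omega> p z - (\<Sum>i\<in>I. c i * pfun \<Omega> (b i) z)) = pfun \<Omega> g"
        unfolding g_def by (auto simp: pfun_def poly_sum)
      ultimately show ?thesis unfolding c_def by auto
    qed
    show ?thesis unfolding cyclic
    proof (rule orth_subset_hclosure[where h = "\<lambda>i. pfun \<Omega> (b i)" and P = "range (pfun \<Omega>)"])
      show "finite I" "\<And>i. i \<in> I \<Longrightarrow> k i \<in> H" "\<And>i. pfun \<Omega> (b i) \<in> H" "range (pfun \<Omega>) \<subseteq> H"
        using I k(1) pfun_mem by blast+
      show "\<exists>p\<in>range (pfun \<Omega>). hnorm ip (\<lambda>z. x z - p z) < e" if "x \<in> H" "e > 0" for x e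
        using polys_dense[OF that] by blast
    qed (use correct in blast)
  qed
  ultimately have "cyclic ip H (pfun \<Omega> f) = orth ip H (k ` I)" by (rule equalityI)
  also have "\<dots> = orth ip H (cspan (k ` I))" using orth_cspan[OF kH] by simp
  finally show ?thesis unfolding kernels .
qed

end


theorem mainTheorem5:
  fixes \<Omega> :: "complex set" and H :: "cfun set" and ip :: "cfun \<Rightarrow> cfun \<Rightarrow> complex"
    and f :: "complex poly" and n :: nat and \<beta> :: "nat \<Rightarrow> complex" and r :: "nat \<Rightarrow> nat"
  assumes "std_space \<Omega> H ip"
    and "f \<noteq> 0"
    and "Rmset \<Omega> H ip f = Zmset f"
    and "inj_on \<beta> {1..n}"
    and "\<forall>j\<in>{1..n}. r j \<ge> 1"
    and "Zmset f = (\<Sum>j\<in>{1..n}. replicate_mset (r j) (\<beta> j))"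
  shows "cyclic ip H (pfun \<Omega> f) =
         orth ip H (cspan {kernel \<Omega> H ip (\<beta> j) l | j l. 1 \<le> j \<and> j \<le> n \<and> l \<le> r j - 1})"
proof -
  interpret std_function_space \<Omega> H ip by unfold_locales (rule assms(1))
  note order = order_if_Zmset_eq_replicates[OF assms(2) finite_atLeastAtMost assms(4,6)]
  have "{kernel \<Omega> H ip (\<beta> j) l | j l. 1 \<le> j \<and> j \<le> n \<and> l \<le> r j - 1}
      = {kernel \<Omega> H ip (\<beta> j) l | j l. j \<in> {1..n} \<and> l < r j}"
  proof -
    have "1 \<le> j \<and> j \<le> n \<and> l \<le> r j - 1 \<longleftrightarrow> j \<in> {1..n} \<and> l < r j" for j l
      using assms(5) by force
    then show ?thesis by simp
  qed
  moreover have "reproducible \<Omega> H ip (\<beta> j) l" if "j \<in> {1..n}" "l < r j" for j l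
    using reproducible_if_Rmset_eq_Zmset[OF assms(2,3)] order(1)[OF that(1)] that(2) by simp
  ultimately show ?thesis
    using cyclic_eq_orth_kernels[OF assms(2) finite_atLeastAtMost assms(4) order] by simp
qed

end
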